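(* Let $w$ be a nonnegative weight function on $\mathbb R$ and let $w_1(t)=(1+t^2)w(t)$. Consider the inner product on $\mathbb R[x,y]/\langle x^2-y^2-1\rangle$ over both branches of the hyperbola $x^2-y^2=1$: $$\langle f,g\rangle=\int_{-\infty}^{\infty}\Big[f(\sqrt{y^2+1},y)g(\sqrt{y^2+1},y)+f(-\sqrt{y^2+1},y)g(-\sqrt{y^2+1},y)\Big]w(y)\,dy .$$ For $n\ge1$, the polynomials $$Y_{n,1}(x,y)=p_n(w;y),\qquad Y_{n,2}(x,y)=x\,p_{n-1}(w_1;y)$$ form an orthogonal basis of $\mathcal H_n(\varpi)$, and $$\langle Y_{n,1},Y_{n,1}\rangle=2h_n(w),\qquad \langle Y_{n,2},Y_{n,2}\rangle=2h_{n-1}(w_1).$$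
   Context: For a nonnegative weight $v$ (finite moments, infinite support), $p_n(v;\cdot)$ denotes an orthogonal polynomial of degree $n$ with respect to $v$ (any fixed nonzero normalization) and $h_n(v)=\int p_n(v;t)^2v(t)\,dt$. $\mathcal H_n(\varpi)$ is the space of polynomials $P$ of degree $n$ in two variables with $\langle P,Q\rangle=0$ for all polynomials $Q$ of degree $<n$ and $\langle P,P\rangle>0$, considered modulo the ideal $\langle x^2-y^2-1\rangle$; it has dimension 2 for $n\ge1$. *)

theory Defs
  imports "HOL-Analysis.Analysis" "HOL-Computational_Algebra.Polynomial"
begin

(* Nonnegative weight on R: measurable, all moments finite, infinite support
   (for an absolutely continuous measure w(t)dt this means {w>0} has positive measure). *)
definition weight :: "(real \<Rightarrow> real) \<Rightarrow> bool" where
  "weight v \<longleftrightarrow> (\<forall>t. 0 \<le> v t) \<and> v \<in> borel_measurable borel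
     \<and> (\<forall>k::nat. integrable lborel (\<lambda>t. t ^ k * v t))
     \<and> emeasure lborel {t. 0 < v t} > 0"

(* p is an orthogonal polynomial of degree n w.r.t. v (any nonzero normalization) *)
definition orth_poly :: "(real \<Rightarrow> real) \<Rightarrow> nat \<Rightarrow> real poly \<Rightarrow> bool" where
  "orth_poly v n p \<longleftrightarrow> p \<noteq> 0 \<and> degree p = n \<and>
     (\<forall>q. degree q < n \<longrightarrow> (LINT t|lborel. poly p t * poly q t * v t) = 0)"

definition hnorm :: "(real \<Rightarrow> real) \<Rightarrow> real poly \<Rightarrow> real" where
  "hnorm v p = (LINT t|lborel. (poly p t)\<^sup>2 * v t)"

(* Bivariate polynomials: P :: real poly poly represents sum_i x^i * (coeff P i)(y) *)
definition eval2 :: "real poly poly \<Rightarrow> real \<Rightarrow> real \<Rightarrow> real" where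
  "eval2 P x y = poly (map_poly (\<lambda>c. poly c y) P) x"

definition tdeg :: "real poly poly \<Rightarrow> nat" where
  "tdeg P = (if P = 0 then 0 else Max {i + degree (coeff P i) | i. coeff P i \<noteq> 0})"

definition hyp_ip :: "(real \<Rightarrow> real) \<Rightarrow> real poly poly \<Rightarrow> real poly poly \<Rightarrow> real" where
  "hyp_ip w f g = (LINT y|lborel.
      (eval2 f (sqrt (y\<^sup>2 + 1)) y * eval2 g (sqrt (y\<^sup>2 + 1)) y
     + eval2 f (- sqrt (y\<^sup>2 + 1)) y * eval2 g (- sqrt (y\<^sup>2 + 1)) y) * w y)"

(* x^2 - y^2 - 1 *)
definition hyp_gen :: "real poly poly" where
  "hyp_gen = [: [:-1, 0, -1:], 0, 1 :]"

definition in_hyp_ideal :: "real poly poly \<Rightarrow> bool" where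
  "in_hyp_ideal P \<longleftrightarrow> (\<exists>Q. P = hyp_gen * Q)"

definition H_space :: "(real \<Rightarrow> real) \<Rightarrow> nat \<Rightarrow> real poly poly set" where
  "H_space w n = {P. tdeg P = n \<and> (\<forall>Q. tdeg Q < n \<longrightarrow> hyp_ip w P Q = 0) \<and> hyp_ip w P P > 0}"

end

theory Submission
  imports Defs
begin

text \<open>Modulo \<open>x\<^sup>2 - y\<^sup>2 - 1\<close> every polynomial of total degree at most \<open>n\<close> reduces to
  \<open>A(y) + x B(y)\<close> with \<open>deg A \<le> n\<close> and \<open>deg B < n\<close>. On the hyperbola the parts odd in \<open>x\<close>
  cancel between the two branches and \<open>x\<^sup>2 = 1 + y\<^sup>2\<close>, so the inner product of
  \<open>A\<^sub>1 + x B\<^sub>1\<close> and \<open>A\<^sub>2 + x B\<^sub>2\<close> is twice the \<open>w\<close>-inner product of \<open>A\<^sub>1, A\<^sub>2\<close> plus twice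
  the \<open>w\<^sub>1\<close>-inner product of \<open>B\<^sub>1, B\<^sub>2\<close>. Orthogonality to lower degree therefore means that
  \<open>A\<close> is \<open>w\<close>-orthogonal to degrees \<open>< n\<close> and \<open>B\<close> is \<open>w\<^sub>1\<close>-orthogonal to degrees \<open>< n - 1\<close>,
  which forces them to be multiples of \<open>p\<^sub>n(w)\<close> and \<open>p\<^sub>n\<^sub>-\<^sub>1(w\<^sub>1)\<close>.\<close>

definition poly_ip :: "(real \<Rightarrow> real) \<Rightarrow> real poly \<Rightarrow> real poly \<Rightarrow> real" where
  "poly_ip v A B = (LINT t|lborel. poly A t * poly B t * v t)"

definition orth_below :: "(real \<Rightarrow> real) \<Rightarrow> nat \<Rightarrow> real poly \<Rightarrow> bool" where
  "orth_below v n A \<longleftrightarrow> (\<forall>r. degree r < n \<longrightarrow> poly_ip v A r = 0)"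

lemma orth_poly_iff: "orth_poly v n p \<longleftrightarrow> p \<noteq> 0 \<and> degree p = n \<and> orth_below v n p"
  by (simp add: orth_poly_def orth_below_def poly_ip_def)

lemma hnorm_eq_poly_ip: "hnorm v p = poly_ip v p p"
  by (simp add: hnorm_def poly_ip_def power2_eq_square)

lemma poly_ip_0_left [simp]: "poly_ip v 0 B = 0"
  and poly_ip_0_right [simp]: "poly_ip v A 0 = 0"
  by (simp_all add: poly_ip_def)

lemma orth_below_0 [simp]: "orth_below v n 0"
  by (simp add: orth_below_def)

lemma weight_integrable_poly:
  assumes "weight v"
  shows "integrable lborel (\<lambda>t. poly r t * v t)"
proof -
  have "integrable lborel (\<lambda>t. \<Sum>i\<le>degree r. coeff r i * (t ^ i * v t))"
    using assms unfolding weight_def by auto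
  then show ?thesis
    by (simp add: poly_altdef sum_distrib_right mult.assoc)
qed

lemma weight_integrable_poly_mult:
  assumes "weight v"
  shows "integrable lborel (\<lambda>t. poly A t * poly B t * v t)"
  using weight_integrable_poly[OF assms, of "A * B"] by simp

lemma weight_mult_1_plus_sq:
  assumes "weight v"
  shows "weight (\<lambda>t. (1 + t\<^sup>2) * v t)"
proof -
  have [measurable]: "v \<in> borel_measurable borel"
    using assms by (simp add: weight_def)
  have "integrable lborel (\<lambda>t. t ^ k * ((1 + t\<^sup>2) * v t))" for k
    using weight_integrable_poly[OF assms, of "monom 1 k * [:1, 0, 1:]"]
    by (simp add: poly_monom algebra_simps power2_eq_square)
  moreover have "{t. 0 < (1 + t\<^sup>2) * v t} = {t. 0 < v t}"
  proof -
    have "0 < 1 + t\<^sup>2" for t :: real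
      by (simp add: add_pos_nonneg)
    then show ?thesis
      by (auto intro: mult_pos_pos zero_less_mult_pos)
  qed
  moreover have "(\<lambda>t. (1 + t\<^sup>2) * v t) \<in> borel_measurable borel"
    by measurable
  ultimately show ?thesis
    using assms unfolding weight_def by auto
qed

lemma poly_ip_self_nonneg:
  assumes "weight v"
  shows "0 \<le> poly_ip v r r"
  using assms unfolding poly_ip_def weight_def by (auto intro!: integral_nonneg_AE)

lemma poly_ip_self_pos:
  assumes v: "weight v" and "r \<noteq> 0"
  shows "0 < poly_ip v r r"
proof (rule ccontr)
  assume "\<not> 0 < poly_ip v r r"
  then have "poly_ip v r r = 0"
    using poly_ip_self_nonneg[OF v, of r] by linarith
  then have "AE t in lborel. poly r t * poly r t * v t = 0"
    using v unfolding poly_ip_def weight_def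
    by (subst (asm) integral_nonneg_eq_0_iff_AE) (auto intro: weight_integrable_poly_mult[OF v])
  moreover have "AE t in lborel. t \<notin> {t. poly r t = 0}"
    using poly_roots_finite[OF \<open>r \<noteq> 0\<close>] by (intro AE_not_in finite_imp_null_set_lborel)
  ultimately have "AE t in lborel. \<not> 0 < v t"
    by eventually_elim auto
  moreover have [measurable]: "v \<in> borel_measurable borel"
    using v by (simp add: weight_def)
  ultimately have "emeasure lborel {t. 0 < v t} = 0"
    by (subst (asm) AE_iff_measurable[where N = "{t. 0 < v t}"]) auto
  then show False
    using v by (simp add: weight_def)
qed

lemma poly_ip_diff_smult_left:
  assumes "weight v"
  shows "poly_ip v (A - smult a p) B = poly_ip v A B - a * poly_ip v p B"
proof -
  have "(\<lambda>t. poly (A - smult a p) t * poly B t * v t)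
      = (\<lambda>t. poly A t * poly B t * v t - a * (poly p t * poly B t * v t))"
    by (simp add: algebra_simps)
  then show ?thesis
    using weight_integrable_poly_mult[OF assms] by (simp add: poly_ip_def)
qed

lemma orth_below_imp_smult:
  assumes v: "weight v" and p: "orth_poly v n p"
    and "degree A \<le> n" and A: "orth_below v n A"
  shows "\<exists>a. A = smult a p"
proof -
  have "p \<noteq> 0" and dp: "degree p = n" and po: "orth_below v n p"
    using p by (auto simp: orth_poly_iff)
  define a where "a = coeff A n / coeff p n"
  define D where "D = A - smult a p"
  have "coeff p n \<noteq> 0"
    using \<open>p \<noteq> 0\<close> dp by auto
  then have "coeff D n = 0"
    by (simp add: D_def a_def)
  moreover have "degree D \<le> n"
    using \<open>degree A \<le> n\<close> dp by (simp add: D_def degree_diff_le)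
  ultimately have "D = 0 \<or> degree D < n"
    by (metis le_neq_implies_less leading_coeff_0_iff)
  moreover have "poly_ip v D D = 0" if "degree D < n"
    using A po that poly_ip_diff_smult_left[OF v]
    by (simp add: D_def orth_below_def)
  ultimately have "D = 0"
    using poly_ip_self_pos[OF v, of D] by (metis less_irrefl)
  then show ?thesis
    by (auto simp: D_def)
qed

lemma tdeg_le_iff: "tdeg P \<le> d \<longleftrightarrow> (\<forall>i. coeff P i \<noteq> 0 \<longrightarrow> i + degree (coeff P i) \<le> d)"
proof (cases "P = 0")
  case False
  let ?S = "{i + degree (coeff P i) | i. coeff P i \<noteq> 0}"
  have "?S \<subseteq> (\<lambda>i. i + degree (coeff P i)) ` {..degree P}"
    using le_degree by fastforce
  then have "finite ?S"
    by (rule finite_subset) simp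
  moreover have "?S \<noteq> {}"
    using False leading_coeff_0_iff by blast
  ultimately show ?thesis
    using False by (auto simp: tdeg_def Max_le_iff)
qed (simp add: tdeg_def)

lemma tdeg_add_le: "tdeg (P + Q) \<le> max (tdeg P) (tdeg Q)"
  unfolding tdeg_le_iff
proof (intro allI impI)
  fix i
  assume "coeff (P + Q) i \<noteq> 0"
  moreover have "degree (coeff P i + coeff Q i) \<le> max (degree (coeff P i)) (degree (coeff Q i))"
    by (rule degree_add_le_max)
  moreover have "coeff P i \<noteq> 0 \<Longrightarrow> i + degree (coeff P i) \<le> tdeg P"
    and "coeff Q i \<noteq> 0 \<Longrightarrow> i + degree (coeff Q i) \<le> tdeg Q"
    using tdeg_le_iff by blast+
  ultimately show "i + degree (coeff (P + Q) i) \<le> max (tdeg P) (tdeg Q)"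
    by (cases "coeff P i = 0"; cases "coeff Q i = 0") auto
qed

lemma tdeg_pair_le_iff:
  "tdeg [:A, B:] \<le> d \<longleftrightarrow> degree A \<le> d \<and> (B \<noteq> 0 \<longrightarrow> Suc (degree B) \<le> d)"
proof -
  have "coeff [:A, B:] i \<noteq> 0 \<Longrightarrow> i = 0 \<or> i = 1" for i
    by (cases i; cases "i - 1") auto
  then have "(\<forall>i. coeff [:A, B:] i \<noteq> 0 \<longrightarrow> i + degree (coeff [:A, B:] i) \<le> d)
      \<longleftrightarrow> (A \<noteq> 0 \<longrightarrow> degree A \<le> d) \<and> (B \<noteq> 0 \<longrightarrow> Suc (degree B) \<le> d)"
    by (metis One_nat_def coeff_pCons_0 coeff_pCons_Suc plus_1_eq_Suc add_0)
  then show ?thesis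
    by (simp add: tdeg_le_iff) (metis degree_0 zero_le)
qed

lemma tdeg_const [simp]: "tdeg [:A:] = degree A"
  using tdeg_pair_le_iff[of A 0 "degree A"] tdeg_pair_le_iff[of A 0 "tdeg [:A:]"] by simp

lemma tdeg_x_le: "tdeg [:0, B:] \<le> Suc (degree B)"
  by (simp add: tdeg_pair_le_iff)

lemma tdeg_x: "B \<noteq> 0 \<Longrightarrow> tdeg [:0, B:] = Suc (degree B)"
  using tdeg_pair_le_iff[of 0 B "Suc (degree B)"] tdeg_pair_le_iff[of 0 B "tdeg [:0, B:]"] by simp

lemma hyp_gen_plus_1_plus_sq: "hyp_gen + [:[:1, 0, 1:]:] = [:0, 0, 1:]"
  by (simp add: hyp_gen_def)

lemma tdeg_smult_1_plus_sq_shift: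
  assumes "tdeg (pCons a (pCons b R)) \<le> d"
  shows "tdeg (smult [:1, 0, 1:] R) \<le> d"
  unfolding tdeg_le_iff
proof (intro allI impI)
  fix i
  assume "coeff (smult [:1, 0, 1:] R) i \<noteq> 0"
  then have "coeff R i \<noteq> 0"
    by (metis coeff_smult mult_zero_right)
  then have "Suc (Suc i) + degree (coeff R i) \<le> d"
    using assms[unfolded tdeg_le_iff, rule_format, of "Suc (Suc i)"] by simp
  moreover have "degree ([:1, 0, 1:] * coeff R i) = 2 + degree (coeff R i)"
    using \<open>coeff R i \<noteq> 0\<close> degree_mult_eq[of "[:1, 0, 1:]" "coeff R i"] by simp
  ultimately show "i + degree (coeff (smult [:1, 0, 1:] R) i) \<le> d"
    by simp
qed

text \<open>Reduction modulo \<open>x\<^sup>2 - y\<^sup>2 - 1\<close>: repeatedly replace \<open>x\<^sup>2\<close> by \<open>1 + y\<^sup>2\<close>,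
  which does not raise the total degree.\<close>
lemma hyp_reduce_le:
  "tdeg P \<le> d \<Longrightarrow> \<exists>Q A B. P = hyp_gen * Q + [:A, B:] \<and> tdeg [:A, B:] \<le> d"
proof (induction "degree P" arbitrary: P rule: less_induct)
  case less
  obtain a b R where P: "P = pCons a (pCons b R)"
    by (metis pCons_cases)
  have "a \<noteq> 0 \<Longrightarrow> degree a \<le> d" "b \<noteq> 0 \<Longrightarrow> Suc (degree b) \<le> d"
    using less.prems[unfolded tdeg_le_iff, rule_format, of 0]
      less.prems[unfolded tdeg_le_iff, rule_format, of 1]
    by (simp_all add: P)
  then have ab: "tdeg [:a, b:] \<le> d"
    by (cases "a = 0") (auto simp: tdeg_pair_le_iff)
  show ?case
  proof (cases "R = 0")
    case True
    then show ?thesis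
      using ab by (intro exI[of _ 0] exI[of _ a] exI[of _ b]) (simp add: P)
  next
    case False
    then have "degree (smult [:1, 0, 1:] R) < degree P"
      by (simp add: P)
    then obtain Q A B where QAB: "smult [:1, 0, 1:] R = hyp_gen * Q + [:A, B:]"
        and "tdeg [:A, B:] \<le> d"
      using less.hyps tdeg_smult_1_plus_sq_shift[OF less.prems[unfolded P]] by blast
    then have "tdeg [:a + A, b + B:] \<le> d"
      using tdeg_add_le[of "[:a, b:]" "[:A, B:]"] ab by simp
    moreover have "P = hyp_gen * (R + Q) + [:a + A, b + B:]"
    proof -
      have "P = [:a, b:] + [:0, 0, 1:] * R"
        by (simp add: P)
      also have "\<dots> = [:a, b:] + hyp_gen * R + smult [:1, 0, 1:] R"
        by (simp flip: hyp_gen_plus_1_plus_sq add: distrib_right)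
      finally show ?thesis
        by (simp add: QAB algebra_simps)
    qed
    ultimately show ?thesis
      by blast
  qed
qed

lemma hyp_reduce: "\<exists>Q A B. P = hyp_gen * Q + [:A, B:] \<and> tdeg [:A, B:] \<le> tdeg P"
  using hyp_reduce_le by blast

lemma in_hyp_ideal_pair_iff: "in_hyp_ideal [:A, B:] \<longleftrightarrow> A = 0 \<and> B = 0"
proof
  assume "in_hyp_ideal [:A, B:]"
  then obtain Q where Q: "[:A, B:] = hyp_gen * Q"
    by (auto simp: in_hyp_ideal_def)
  have "Q = 0"
  proof (rule ccontr)
    assume "Q \<noteq> 0"
    moreover have "hyp_gen \<noteq> 0" "degree hyp_gen = 2"
      by (simp_all add: hyp_gen_def)
    ultimately have "degree (hyp_gen * Q) = 2 + degree Q"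
      by (simp add: degree_mult_eq)
    then show False
      using Q degree_pCons_le[of A "[:B:]"] by simp
  qed
  then show "A = 0 \<and> B = 0"
    using Q by simp
qed (simp add: in_hyp_ideal_def)

lemma eval2_pCons: "eval2 (pCons a P) x y = poly a y + x * eval2 P x y"
  by (simp add: eval2_def map_poly_pCons)

lemma eval2_0 [simp]: "eval2 0 x y = 0"
  by (simp add: eval2_def)

lemma eval2_add: "eval2 (P + Q) x y = eval2 P x y + eval2 Q x y"
  by (induction P Q rule: poly_induct2) (simp_all add: eval2_pCons algebra_simps)

lemma eval2_smult: "eval2 (smult a Q) x y = poly a y * eval2 Q x y"
  by (induction Q) (simp_all add: eval2_pCons algebra_simps)

lemma eval2_mult: "eval2 (P * Q) x y = eval2 P x y * eval2 Q x y"
  by (induction P) (simp_all add: eval2_pCons eval2_add eval2_smult algebra_simps)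

lemma eval2_hyp_gen: "x\<^sup>2 = y\<^sup>2 + 1 \<Longrightarrow> eval2 hyp_gen x y = 0"
  by (simp add: hyp_gen_def eval2_pCons power2_eq_square algebra_simps)

lemma eval2_reduced_on_hyperbola:
  "x\<^sup>2 = y\<^sup>2 + 1 \<Longrightarrow> eval2 (hyp_gen * Q + [:A, B:]) x y = poly A y + x * poly B y"
  by (simp add: eval2_add eval2_mult eval2_hyp_gen eval2_pCons)

lemma hyp_ip_reduced:
  assumes w: "weight w"
  shows "hyp_ip w (hyp_gen * Q1 + [:A1, B1:]) (hyp_gen * Q2 + [:A2, B2:])
    = 2 * poly_ip w A1 A2 + 2 * poly_ip (\<lambda>t. (1 + t\<^sup>2) * w t) B1 B2"
proof -
  have pointwise: "(eval2 (hyp_gen * Q1 + [:A1, B1:]) s y * eval2 (hyp_gen * Q2 + [:A2, B2:]) s y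
      + eval2 (hyp_gen * Q1 + [:A1, B1:]) (- s) y * eval2 (hyp_gen * Q2 + [:A2, B2:]) (- s) y) * w y
    = 2 * (poly A1 y * poly A2 y * w y) + 2 * (poly B1 y * poly B2 y * ((1 + y\<^sup>2) * w y))"
    (is "?lhs = _") if "s\<^sup>2 = y\<^sup>2 + 1" for s y
  proof -
    have "?lhs = ((poly A1 y + s * poly B1 y) * (poly A2 y + s * poly B2 y)
        + (poly A1 y - s * poly B1 y) * (poly A2 y - s * poly B2 y)) * w y"
      using that by (simp add: eval2_reduced_on_hyperbola)
    also have "\<dots> = 2 * (poly A1 y * poly A2 y * w y) + 2 * (poly B1 y * poly B2 y * (s\<^sup>2 * w y))"
      by (simp add: algebra_simps power2_eq_square)
    finally show ?thesis
      using that by simp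
  qed
  have on_hyperbola: "(sqrt (y\<^sup>2 + 1))\<^sup>2 = y\<^sup>2 + 1" for y :: real
    by simp
  show ?thesis
    unfolding hyp_ip_def poly_ip_def pointwise[OF on_hyperbola]
    using weight_integrable_poly_mult[OF w] weight_integrable_poly_mult[OF weight_mult_1_plus_sq[OF w]]
    by simp
qed

lemma hyp_ip_pair:
  assumes "weight w"
  shows "hyp_ip w [:A1, B1:] [:A2, B2:]
    = 2 * poly_ip w A1 A2 + 2 * poly_ip (\<lambda>t. (1 + t\<^sup>2) * w t) B1 B2"
  using hyp_ip_reduced[OF assms, of 0 A1 B1 0 A2 B2] by simp

lemma hyp_ip_pair_orth_lower:
  assumes w: "weight w" and A: "orth_below w n A"
    and B: "orth_below (\<lambda>t. (1 + t\<^sup>2) * w t) (n - 1) B" and "tdeg R < n"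
  shows "hyp_ip w [:A, B:] R = 0"
proof -
  obtain Q A' B' where R: "R = hyp_gen * Q + [:A', B':]" and "tdeg [:A', B':] \<le> tdeg R"
    using hyp_reduce by blast
  then have "degree A' < n" and "B' \<noteq> 0 \<Longrightarrow> degree B' < n - 1"
    using \<open>tdeg R < n\<close> by (auto simp: tdeg_pair_le_iff)
  then have "poly_ip w A A' = 0" and "poly_ip (\<lambda>t. (1 + t\<^sup>2) * w t) B B' = 0"
    using A B unfolding orth_below_def by (metis poly_ip_0_right)+
  then show ?thesis
    using hyp_ip_reduced[OF w, of 0 A B Q A' B'] by (simp add: R)
qed

lemma orth_below_of_hyp_orth_lower:
  assumes w: "weight w" and orth: "\<forall>R. tdeg R < n \<longrightarrow> hyp_ip w (hyp_gen * Q + [:A, B:]) R = 0"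
  shows "orth_below w n A" and "orth_below (\<lambda>t. (1 + t\<^sup>2) * w t) (n - 1) B"
proof -
  show "orth_below w n A"
    unfolding orth_below_def
  proof (intro allI impI)
    fix r :: "real poly"
    assume "degree r < n"
    then show "poly_ip w A r = 0"
      using orth hyp_ip_reduced[OF w, of Q A B 0 r 0] by simp
  qed
  show "orth_below (\<lambda>t. (1 + t\<^sup>2) * w t) (n - 1) B"
    unfolding orth_below_def
  proof (intro allI impI)
    fix r :: "real poly"
    assume "degree r < n - 1"
    then have "tdeg [:0, r:] < n"
      using tdeg_x_le[of r] by linarith
    then show "poly_ip (\<lambda>t. (1 + t\<^sup>2) * w t) B r = 0"
      using orth hyp_ip_reduced[OF w, of Q A B 0 0 r] by simp
  qed
qed

lemma pair_in_H_space:
  assumes w: "weight w" and "tdeg [:A, B:] = n" and "A \<noteq> 0 \<or> B \<noteq> 0"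
    and "orth_below w n A" and "orth_below (\<lambda>t. (1 + t\<^sup>2) * w t) (n - 1) B"
  shows "[:A, B:] \<in> H_space w n"
proof -
  have "0 < poly_ip w A A + poly_ip (\<lambda>t. (1 + t\<^sup>2) * w t) B B"
    using \<open>A \<noteq> 0 \<or> B \<noteq> 0\<close> poly_ip_self_pos poly_ip_self_nonneg w weight_mult_1_plus_sq
    by (metis add_pos_nonneg add_nonneg_pos)
  then show ?thesis
    using assms hyp_ip_pair_orth_lower hyp_ip_pair[OF w, of A B A B]
    by (simp add: H_space_def)
qed

lemma H_space_mod_hyp_span:
  assumes w: "weight w" and p: "orth_poly w n p"
    and q: "orth_poly (\<lambda>t. (1 + t\<^sup>2) * w t) (n - 1) q" and P: "P \<in> H_space w n"
  shows "\<exists>Q a b. P = hyp_gen * Q + [:smult a p, smult b q:]"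
proof -
  obtain Q A B where PQ: "P = hyp_gen * Q + [:A, B:]" and "tdeg [:A, B:] \<le> n"
    using hyp_reduce[of P] P by (auto simp: H_space_def)
  then have "degree A \<le> n" and "degree B \<le> n - 1"
    by (cases "B = 0"; auto simp: tdeg_pair_le_iff)+
  moreover have "orth_below w n A" and "orth_below (\<lambda>t. (1 + t\<^sup>2) * w t) (n - 1) B"
    using orth_below_of_hyp_orth_lower[OF w] P by (auto simp: H_space_def PQ)
  ultimately obtain a b where "A = smult a p" and "B = smult b q"
    using orth_below_imp_smult[OF w p] orth_below_imp_smult[OF weight_mult_1_plus_sq[OF w] q]
    by metis
  then show ?thesis
    using PQ by blast
qed

theorem theorem5p1:
  fixes w :: "real \<Rightarrow> real" and n :: nat and p q :: "real poly"
  assumes "weight w" and "n \<ge> 1"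
    and "orth_poly w n p"
    and "orth_poly (\<lambda>t. (1 + t\<^sup>2) * w t) (n - 1) q"
  shows "[:p:] \<in> H_space w n \<and> [:0, q:] \<in> H_space w n
    \<and> hyp_ip w [:p:] [:0, q:] = 0
    \<and> (\<forall>a b::real. in_hyp_ideal (smult [:a:] [:p:] + smult [:b:] [:0, q:]) \<longrightarrow> a = 0 \<and> b = 0)
    \<and> (\<forall>P \<in> H_space w n. \<exists>a b::real.
          in_hyp_ideal (P - (smult [:a:] [:p:] + smult [:b:] [:0, q:])))
    \<and> hyp_ip w [:p:] [:p:] = 2 * hnorm w p
    \<and> hyp_ip w [:0, q:] [:0, q:] = 2 * hnorm (\<lambda>t. (1 + t\<^sup>2) * w t) q"
proof -
  have p: "p \<noteq> 0" "degree p = n" "orth_below w n p"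
    and q: "q \<noteq> 0" "degree q = n - 1" "orth_below (\<lambda>t. (1 + t\<^sup>2) * w t) (n - 1) q"
    using assms(3,4) by (simp_all add: orth_poly_iff)
  have "[:p:] \<in> H_space w n"
    using pair_in_H_space[OF assms(1), of p 0] p by simp
  moreover have "[:0, q:] \<in> H_space w n"
    using pair_in_H_space[OF assms(1), of 0 q] q \<open>n \<ge> 1\<close> by (simp add: tdeg_x)
  moreover have "in_hyp_ideal (smult [:a:] [:p:] + smult [:b:] [:0, q:]) \<longleftrightarrow> a = 0 \<and> b = 0"
    for a b
    using in_hyp_ideal_pair_iff[of "smult a p" "smult b q"] p q by simp
  moreover have "\<exists>a b. in_hyp_ideal (P - (smult [:a:] [:p:] + smult [:b:] [:0, q:]))"
    if P: "P \<in> H_space w n" for P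
  proof -
    obtain Q a b where "P = hyp_gen * Q + [:smult a p, smult b q:]"
      using H_space_mod_hyp_span[OF assms(1,3,4) P] by blast
    then have "P - (smult [:a:] [:p:] + smult [:b:] [:0, q:]) = hyp_gen * Q"
      by simp
    then show ?thesis
      unfolding in_hyp_ideal_def by blast
  qed
  ultimately show ?thesis
    using hyp_ip_pair[OF assms(1), of p 0 p 0] hyp_ip_pair[OF assms(1), of p 0 0 q]
      hyp_ip_pair[OF assms(1), of 0 q 0 q]
    by (simp add: hnorm_eq_poly_ip)
qed

end
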